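(* Let $N\ge 2$ be an integer and write $N=2l+1$ or $N=2l+2$ with $l\ge 0$ an integer. Let $P_N(\zeta)=\prod_{n=1}^N(\zeta-\zeta_n)$ be a monic complex polynomial of degree $N$, and define the weighted symmetric functions $\Delta_n^N$ of its roots by \[ \binom{N}{n}\Delta_n^N=\sum_{1\le i_1<\dots<i_n\le N}\zeta_{i_1}\zeta_{i_2}\cdots\zeta_{i_n},\qquad 0\le n\le N, \] (so $\Delta_0^N=1$ and $P_N(\zeta)=\sum_{n=0}^N\binom{N}{n}\Delta_n^N\zeta^{N-n}$). Suppose that \[ |\Delta_{N-2}^N|=1\qquad\text{and}\qquad \Delta_n^N=\overline{\Delta_{N-2-n}^N}\,\Delta_{N-2}^N \] for all $1\le n\le l-1$ when $N=2l+1$, and for all $1\le n\le l$ when $N=2l+2$. Suppose moreover that none of the roots $\zeta_n$ lies on the unit circle $|\zeta|=1$. Then the number of roots of $P_N$ (counted with multiplicity) lying inside the unit circle is less than or equal to $1+N/2$.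
   Context: $\overline{w}$ denotes complex conjugation. These relations amount to $N-2$ real conditions on the coefficients of $P_N$, giving a real $(N+2)$-dimensional family of degree $N$ polynomials. *)

theory Defs
  imports Complex_Main
begin

text \<open>Roots are given as a function z indexed by 1..N (repetitions = multiplicity).
  Weighted elementary symmetric function: (N choose n) * Delta N z n = e_n(z_1,...,z_N).\<close>
definition Delta :: "nat \<Rightarrow> (nat \<Rightarrow> complex) \<Rightarrow> nat \<Rightarrow> complex" where
  "Delta N z n = (\<Sum>S\<in>{S. S \<subseteq> {1..N} \<and> card S = n}. \<Prod>i\<in>S. z i) / of_nat (N choose n)"

end

theory Submission
  imports Defs "HOL-Analysis.Analysis"
begin

(*
  Write \<nu>_n = N - 2n - 2, a = N(N+2), b = 2(N+1), and pick c with c \<omega> = cnj c, where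
  \<omega> = Delta N z (N-2). The trigonometric polynomial
    q(s) = c cis(-2s) \<Prod>_j (z_j cis(-s) + cis s) = \<Sum>_n c e_n(z) cis(\<nu>_n s)
  has a continuous logarithm whose imaginary part grows by 2\<pi>(2k - N - 2) over [0, 2\<pi>], k being
  the number of roots inside the unit circle. The hypotheses pair the terms n and N-2-n so that
  \<Sum>_n (a + b \<nu>_n + \<nu>_n^2) c e_n(z) cis(\<nu>_n s) is real; with Y = Im q this says that
  F = b Re q + Y' satisfies F' = a Y. Were the argument of q to grow by 2\<pi>, it would run from a
  multiple of \<pi> to the next one with Y of constant sign, say Y > 0. On that interval F is
  nondecreasing, yet F > 0 at its start (Re q > 0, Y' \<ge> 0) and F < 0 at its end (Re q < 0,
  Y' \<le> 0). Hence 2k - N - 2 < 1.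
*)

section \<open>The argument of a solution of the second order equation\<close>

lemma IVT_first_hit:
  fixes f :: "real \<Rightarrow> real"
  assumes "a \<le> b" "f a \<le> y" "y \<le> f b" and cont: "continuous_on {a..b} f"
  obtains \<sigma> where "a \<le> \<sigma>" "\<sigma> \<le> b" "f \<sigma> = y" "\<And>t. a \<le> t \<Longrightarrow> t < \<sigma> \<Longrightarrow> f t < y"
proof -
  define S where "S = {t \<in> {a..b}. y \<le> f t}"
  have "closed S"
    unfolding S_def by (rule continuous_on_closed_Collect_le[OF continuous_on_const cont]) simp
  moreover have "b \<in> S" "bdd_below S"
    using assms(1,3) unfolding S_def by (auto intro: bdd_belowI[of _ a])
  ultimately have "Inf S \<in> S" and Inf_le: "\<And>t. t \<in> S \<Longrightarrow> Inf S \<le> t"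
    by (auto intro: closed_contains_Inf cInf_lower)
  then have range: "a \<le> Inf S" "Inf S \<le> b" and "y \<le> f (Inf S)"
    unfolding S_def by auto
  obtain t where "a \<le> t" "t \<le> Inf S" "f t = y"
    using IVT'[OF assms(2) \<open>y \<le> f (Inf S)\<close> range(1)] continuous_on_subset[OF cont] range
    by auto
  moreover from this have "t \<in> S"
    using range unfolding S_def by auto
  ultimately have "f (Inf S) = y"
    using Inf_le by force
  moreover have "f t < y" if "a \<le> t" "t < Inf S" for t
    using Inf_le[of t] that range unfolding S_def by force
  ultimately show ?thesis
    using that range by blast
qed

lemma IVT_last_hit:
  fixes f :: "real \<Rightarrow> real"
  assumes "a \<le> b" "f a \<le> y" "y \<le> f b" and cont: "continuous_on {a..b} f"
  obtains \<tau> where "a \<le> \<tau>" "\<tau> \<le> b" "f \<tau> = y" "\<And>t. \<tau> < t \<Longrightarrow> t \<le> b \<Longrightarrow> y < f t"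
proof -
  have "continuous_on {a..b} (\<lambda>t. - f (a + b - t))"
    by (intro continuous_intros continuous_on_compose2[OF cont]) auto
  then obtain \<sigma> where \<sigma>: "a \<le> \<sigma>" "\<sigma> \<le> b" "- f (a + b - \<sigma>) = - y"
    and lower: "\<And>t. a \<le> t \<Longrightarrow> t < \<sigma> \<Longrightarrow> - f (a + b - t) < - y"
    using IVT_first_hit[of a b "\<lambda>t. - f (a + b - t)" "- y"] assms by auto
  show ?thesis
  proof (rule that[of "a + b - \<sigma>"])
    show "y < f t" if "a + b - \<sigma> < t" "t \<le> b" for t
      using lower[of "a + b - t"] that by simp
  qed (use \<sigma> in auto)
qed

lemma IVT_crossing:
  fixes f :: "real \<Rightarrow> real"
  assumes "a \<le> b" "f a \<le> y\<^sub>1" "y\<^sub>1 < y\<^sub>2" "y\<^sub>2 \<le> f b" and cont: "continuous_on {a..b} f"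
  obtains \<tau> \<sigma> where "a \<le> \<tau>" "\<tau> < \<sigma>" "\<sigma> \<le> b" "f \<tau> = y\<^sub>1" "f \<sigma> = y\<^sub>2"
    "\<And>t. \<tau> < t \<Longrightarrow> t < \<sigma> \<Longrightarrow> y\<^sub>1 < f t \<and> f t < y\<^sub>2"
proof -
  have "f a \<le> y\<^sub>2"
    using assms(2,3) by linarith
  then obtain \<sigma> where \<sigma>: "a \<le> \<sigma>" "\<sigma> \<le> b" "f \<sigma> = y\<^sub>2"
    and below: "\<And>t. a \<le> t \<Longrightarrow> t < \<sigma> \<Longrightarrow> f t < y\<^sub>2"
    using IVT_first_hit[OF \<open>a \<le> b\<close> _ \<open>y\<^sub>2 \<le> f b\<close> cont] by blast
  have "y\<^sub>1 \<le> f \<sigma>" "continuous_on {a..\<sigma>} f"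
    using \<sigma> assms(3) continuous_on_subset[OF cont] by auto
  then obtain \<tau> where \<tau>: "a \<le> \<tau>" "\<tau> \<le> \<sigma>" "f \<tau> = y\<^sub>1"
    and above: "\<And>t. \<tau> < t \<Longrightarrow> t \<le> \<sigma> \<Longrightarrow> y\<^sub>1 < f t"
    using IVT_last_hit[of a \<sigma> f y\<^sub>1] \<sigma> assms(2) by blast
  have "\<tau> < \<sigma>"
    using \<tau> \<sigma> \<open>y\<^sub>1 < y\<^sub>2\<close> by (metis order_le_less order_less_irrefl)
  show ?thesis
  proof (rule that[of \<tau> \<sigma>])
    show "y\<^sub>1 < f t \<and> f t < y\<^sub>2" if "\<tau> < t" "t < \<sigma>" for t
      using above[of t] below[of t] that \<tau> by auto
  qed (use \<tau> \<sigma> \<open>\<tau> < \<sigma>\<close> in auto)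
qed

lemma DERIV_right_min_nonneg:
  fixes f :: "real \<Rightarrow> real"
  assumes "(f has_real_derivative l) (at x)" "x < y" "\<And>t. x < t \<Longrightarrow> t < y \<Longrightarrow> f x \<le> f t"
  shows "0 \<le> l"
proof (rule ccontr)
  assume "\<not> 0 \<le> l"
  then obtain d where "0 < d" and dec: "\<And>h. 0 < h \<Longrightarrow> h < d \<Longrightarrow> f (x + h) < f x"
    using DERIV_neg_dec_right[OF assms(1)] by force
  define h where "h = min d (y - x) / 2"
  have "0 < h" "h < d" "x + h < y"
    using \<open>0 < d\<close> assms(2) unfolding h_def by (auto simp: min_def field_simps)
  then show False
    using dec assms(3)[of "x + h"] by force
qed

lemma DERIV_left_min_nonpos:
  fixes f :: "real \<Rightarrow> real"
  assumes "(f has_real_derivative l) (at x)" "y < x" "\<And>t. y < t \<Longrightarrow> t < x \<Longrightarrow> f x \<le> f t"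
  shows "l \<le> 0"
proof (rule ccontr)
  assume "\<not> l \<le> 0"
  then obtain d where "0 < d" and inc: "\<And>h. 0 < h \<Longrightarrow> h < d \<Longrightarrow> f (x - h) < f x"
    using DERIV_pos_inc_left[OF assms(1)] by force
  define h where "h = min d (x - y) / 2"
  have "0 < h" "h < d" "y < x - h"
    using \<open>0 < d\<close> assms(2) unfolding h_def by (auto simp: min_def field_simps)
  then show False
    using inc assms(3)[of "x - h"] by force
qed

lemma ode_no_half_turn:
  fixes q :: "real \<Rightarrow> complex" and Y' :: "real \<Rightarrow> real"
  assumes "0 \<le> a" "0 < b" "\<tau> < \<sigma>"
    and dY: "\<And>s. ((\<lambda>t. Im (q t)) has_real_derivative Y' s) (at s)"
    and dF: "\<And>s. ((\<lambda>t. b * Re (q t) + Y' t) has_real_derivative a * Im (q s)) (at s)"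
    and "Im (q \<tau>) = 0" "0 < Re (q \<tau>)" "Im (q \<sigma>) = 0" "Re (q \<sigma>) < 0"
    and upper: "\<And>t. \<tau> < t \<Longrightarrow> t < \<sigma> \<Longrightarrow> 0 < Im (q t)"
  shows False
proof -
  have "0 \<le> Y' \<tau>"
    using assms by (intro DERIV_right_min_nonneg[OF dY \<open>\<tau> < \<sigma>\<close>]) force
  moreover have "Y' \<sigma> \<le> 0"
    using assms by (intro DERIV_left_min_nonpos[OF dY \<open>\<tau> < \<sigma>\<close>]) force
  moreover have "b * Re (q \<tau>) + Y' \<tau> \<le> b * Re (q \<sigma>) + Y' \<sigma>"
  proof (rule DERIV_nonneg_imp_increasing_open[of \<tau> \<sigma> "\<lambda>t. b * Re (q t) + Y' t"])
    show "continuous_on {\<tau>..\<sigma>} (\<lambda>t. b * Re (q t) + Y' t)"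
      using dF by (meson DERIV_isCont continuous_at_imp_continuous_on)
    show "\<exists>y. ((\<lambda>t. b * Re (q t) + Y' t) has_real_derivative y) (at t) \<and> 0 \<le> y"
      if "\<tau> < t" "t < \<sigma>" for t
      using dF upper[OF that] \<open>0 \<le> a\<close> by (meson less_imp_le mult_nonneg_nonneg)
  qed (use \<open>\<tau> < \<sigma>\<close> in simp)
  moreover have "0 < b * Re (q \<tau>)" "b * Re (q \<sigma>) < 0"
    using assms(2,7,9) by (simp_all add: mult_pos_neg)
  ultimately show False
    by linarith
qed

lemma ode_arg_increase_less_2pi:
  fixes g :: "real \<Rightarrow> complex" and Y' :: "real \<Rightarrow> real"
  assumes "0 \<le> a" "0 < b" "t\<^sub>0 \<le> t\<^sub>1" and cont: "continuous_on {t\<^sub>0..t\<^sub>1} g"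
    and dY: "\<And>s. ((\<lambda>t. Im (exp (g t))) has_real_derivative Y' s) (at s)"
    and dF: "\<And>s. ((\<lambda>t. b * Re (exp (g t)) + Y' t) has_real_derivative a * Im (exp (g s))) (at s)"
  shows "Im (g t\<^sub>1) < Im (g t\<^sub>0) + 2 * pi"
proof (rule ccontr)
  assume turn: "\<not> ?thesis"
  define L where "L = of_int \<lceil>Im (g t\<^sub>0) / pi\<rceil> * pi"
  have "of_int \<lceil>Im (g t\<^sub>0) / pi\<rceil> < Im (g t\<^sub>0) / pi + 1"
    by linarith
  then have "Im (g t\<^sub>0) \<le> L" "L < Im (g t\<^sub>0) + pi"
    using mult_right_mono[OF le_of_int_ceiling[of "Im (g t\<^sub>0) / pi"], of pi]
    unfolding L_def by (simp_all add: field_simps)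
  then have L: "Im (g t\<^sub>0) \<le> L" "L < L + pi" "L + pi \<le> Im (g t\<^sub>1)"
    using turn by simp_all
  have "continuous_on {t\<^sub>0..t\<^sub>1} (\<lambda>t. Im (g t))"
    by (intro continuous_intros cont)
  then obtain \<tau> \<sigma> where "\<tau> < \<sigma>" "Im (g \<tau>) = L" "Im (g \<sigma>) = L + pi"
    and between: "\<And>t. \<tau> < t \<Longrightarrow> t < \<sigma> \<Longrightarrow> L < Im (g t) \<and> Im (g t) < L + pi"
    by (rule IVT_crossing[OF \<open>t\<^sub>0 \<le> t\<^sub>1\<close> L]) blast
  txt \<open>Rotating by the multiple \<open>L\<close> of \<open>\<pi>\<close> multiplies \<open>exp \<circ> g\<close> by the real number
    \<open>cos L = \<plusminus>1\<close>, which preserves both differential relations.\<close>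
  have "cis (- L) = of_real (cos L)"
    unfolding L_def by (simp add: complex_eq_iff sin_zero_iff_int2)
  define q where "q t = exp (g t + \<i> * of_real (- L))" for t
  have q_scaled: "q t = of_real (cos L) * exp (g t)" for t
    unfolding q_def exp_add cis_conv_exp[symmetric] \<open>cis (- L) = of_real (cos L)\<close> by simp
  have q_polar: "q t = exp (Re (g t)) * cis (Im (g t) - L)" for t
    unfolding q_def by (subst exp_eq_polar) simp
  show False
  proof (rule ode_no_half_turn[of a b \<tau> \<sigma> q "\<lambda>t. cos L * Y' t"])
    show "((\<lambda>t. Im (q t)) has_real_derivative cos L * Y' s) (at s)" for s
      using DERIV_cmult[OF dY, of "cos L"] by (simp add: q_scaled)
    show "((\<lambda>t. b * Re (q t) + cos L * Y' t) has_real_derivative a * Im (q s)) (at s)" for s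
      using DERIV_cmult[OF dF, of "cos L"] by (simp add: q_scaled algebra_simps)
    show "0 < Im (q t)" if "\<tau> < t" "t < \<sigma>" for t
      using between[OF that] by (simp add: q_polar sin_gt_zero)
  qed (use assms \<open>\<tau> < \<sigma>\<close> \<open>Im (g \<tau>) = L\<close> \<open>Im (g \<sigma>) = L + pi\<close> in \<open>simp_all add: q_polar\<close>)
qed

lemma trig_sum_second_order_ode:
  fixes d :: "'i \<Rightarrow> complex" and \<nu> :: "'i \<Rightarrow> real" and a b :: real
  assumes real: "\<And>s. Im (\<Sum>n\<in>I. of_real (a + b * \<nu> n + \<nu> n ^ 2) * d n * cis (\<nu> n * s)) = 0"
  defines "q \<equiv> \<lambda>s. \<Sum>n\<in>I. d n * cis (\<nu> n * s)"
    and "Y' \<equiv> \<lambda>s. \<Sum>n\<in>I. \<nu> n * Re (d n * cis (\<nu> n * s))"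
  shows "((\<lambda>s. Im (q s)) has_real_derivative Y' s) (at s)"
    and "((\<lambda>s. b * Re (q s) + Y' s) has_real_derivative a * Im (q s)) (at s)"
proof -
  have dIm: "((\<lambda>s. Im (d n * cis (\<nu> n * s))) has_real_derivative \<nu> n * Re (d n * cis (\<nu> n * s))) (at s)"
    and dRe: "((\<lambda>s. Re (d n * cis (\<nu> n * s))) has_real_derivative - \<nu> n * Im (d n * cis (\<nu> n * s))) (at s)"
    for n s by (auto intro!: derivative_eq_intros simp: algebra_simps)
  show "((\<lambda>s. Im (q s)) has_real_derivative Y' s) (at s)"
    unfolding q_def Y'_def Im_sum by (intro DERIV_sum dIm)
  have "((\<lambda>s. b * Re (q s) + Y' s) has_real_derivative
      b * (\<Sum>n\<in>I. - \<nu> n * Im (d n * cis (\<nu> n * s))) + (\<Sum>n\<in>I. \<nu> n * (- \<nu> n * Im (d n * cis (\<nu> n * s))))) (at s)"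
    unfolding q_def Y'_def Re_sum by (intro DERIV_add DERIV_cmult DERIV_sum dRe)
  moreover have "b * (\<Sum>n\<in>I. - \<nu> n * y n) + (\<Sum>n\<in>I. \<nu> n * (- \<nu> n * y n)) = a * (\<Sum>n\<in>I. y n)"
    if "(\<Sum>n\<in>I. (a + b * \<nu> n + \<nu> n ^ 2) * y n) = 0" for y :: "'i \<Rightarrow> real"
    using that by (simp add: algebra_simps power2_eq_square sum.distrib sum_distrib_left sum_negf)
  moreover have "Im (\<Sum>n\<in>I. of_real (a + b * \<nu> n + \<nu> n ^ 2) * d n * cis (\<nu> n * s))
      = (\<Sum>n\<in>I. (a + b * \<nu> n + \<nu> n ^ 2) * Im (d n * cis (\<nu> n * s)))"
    by (simp add: Im_sum mult.assoc)
  ultimately show "((\<lambda>s. b * Re (q s) + Y' s) has_real_derivative a * Im (q s)) (at s)"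
    using real[of s] by (simp add: q_def Im_sum)
qed

section \<open>Symmetric functions of the roots\<close>

definition esym :: "nat \<Rightarrow> (nat \<Rightarrow> 'a::comm_semiring_1) \<Rightarrow> nat \<Rightarrow> 'a" where
  "esym N z n = (\<Sum>S | S \<subseteq> {1..N} \<and> card S = n. \<Prod>i\<in>S. z i)"

lemma esym_eq_Delta: "n \<le> N \<Longrightarrow> esym N z n = of_nat (N choose n) * Delta N z n"
  by (simp add: Delta_def esym_def)

lemma Delta_0 [simp]: "Delta N z 0 = 1"
proof -
  have "card S = 0 \<longleftrightarrow> S = {}" if "S \<subseteq> {1..N}" for S :: "nat set"
    using finite_subset[OF that] by auto
  then have "{S. S \<subseteq> {1..N} \<and> card S = 0} = {{}}"
    by auto
  then show ?thesis
    by (simp add: Delta_def)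
qed

lemma prod_linear_esym_expansion:
  fixes z :: "nat \<Rightarrow> 'a::comm_semiring_1"
  shows "(\<Prod>j=1..N. z j * u + w) = (\<Sum>n=0..N. esym N z n * u ^ n * w ^ (N - n))"
proof -
  have "(\<Prod>j=1..N. z j * u + w) = (\<Sum>X\<in>Pow {1..N}. (\<Prod>j\<in>X. z j) * u ^ card X * w ^ (N - card X))"
  proof (subst prod_add, simp, intro sum.cong refl)
    fix X assume "X \<in> Pow {1..N}"
    then have "card ({1..N} - X) = N - card X"
      by (auto simp: card_Diff_subset finite_subset)
    then show "(\<Prod>j\<in>X. z j * u) * (\<Prod>j\<in>{1..N} - X. w) = (\<Prod>j\<in>X. z j) * u ^ card X * w ^ (N - card X)"
      by (simp add: prod.distrib)
  qed
  also have "\<dots> = (\<Sum>n=0..N. \<Sum>X | X \<in> Pow {1..N} \<and> card X = n. (\<Prod>j\<in>X. z j) * u ^ card X * w ^ (N - card X))"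
    by (rule sum.group[symmetric]) (auto intro: card_mono[of "{1..N}", simplified])
  also have "\<dots> = (\<Sum>n=0..N. esym N z n * u ^ n * w ^ (N - n))"
    unfolding esym_def by (auto simp: sum_distrib_right intro!: sum.cong)
  finally show ?thesis .
qed

lemma binomial_reflect_weight:
  assumes "n + 2 \<le> N"
  shows "(real n + 1) * (real n + 2) * real (N choose (N - 2 - n))
    = (real N - real n - 1) * (real N - real n) * real (N choose n)"
proof -
  have step: "Suc k * (N choose Suc k) = (N - k) * (N choose k)" for k
    by (metis binomial_absorption binomial_absorb_comp)
  have "(n + 2) * (N choose (n + 2)) = (N - n - 1) * (N choose (n + 1))"
    using step[of "n + 1"] by simp
  then have "(n + 1) * (n + 2) * (N choose (n + 2)) = (N - n - 1) * ((n + 1) * (N choose (n + 1)))"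
    by (metis mult.assoc mult.left_commute)
  also have "\<dots> = (N - n - 1) * (N - n) * (N choose n)"
    using step[of n] by simp
  finally have "real ((n + 1) * (n + 2) * (N choose (n + 2))) = real ((N - n - 1) * (N - n) * (N choose n))"
    by (rule arg_cong)
  moreover have "real (N - n - 1) = real N - real n - 1" "real (N - n) = real N - real n"
    using assms by (simp_all add: of_nat_diff)
  moreover have "N choose (N - 2 - n) = N choose (n + 2)"
    using binomial_symmetric[of "n + 2" N] assms by (simp add: diff_diff_add)
  ultimately show ?thesis
    by (simp only: of_nat_mult of_nat_add of_nat_1 of_nat_numeral)
qed

lemma Im_sum_reflect_cnj:
  fixes t :: "nat \<Rightarrow> complex"
  assumes "\<And>n. n \<le> m \<Longrightarrow> t n = cnj (t (m - n))"
  shows "Im (\<Sum>n=0..m. t n) = 0"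
proof -
  have "(\<Sum>n=0..m. t n) = (\<Sum>n=0..m. cnj (t (m - n)))"
    by (rule sum.cong[OF refl]) (rule assms, simp)
  also have "\<dots> = cnj (\<Sum>n=0..m. t n)"
    by (subst sum.atLeastAtMost_rev) (simp add: cnj_sum)
  finally have "Im (\<Sum>n=0..m. t n) = - Im (\<Sum>n=0..m. t n)"
    by (metis complex_cnj_cancel_iff cnj.sel(2))
  then show ?thesis
    by simp
qed

lemma Delta_reflection:
  fixes z :: "nat \<Rightarrow> complex"
  assumes "N = 2*l+1 \<or> N = 2*l+2"
    and unimodular: "cmod (Delta N z (N-2)) = 1"
    and hyp: "\<And>n. 1 \<le> n \<Longrightarrow> (N = 2*l+1 \<longrightarrow> n \<le> l-1) \<Longrightarrow> (N = 2*l+2 \<longrightarrow> n \<le> l) \<Longrightarrow>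
           Delta N z n = cnj (Delta N z (N-2-n)) * Delta N z (N-2)"
    and "n \<le> N - 2"
  shows "Delta N z n = Delta N z (N-2) * cnj (Delta N z (N-2-n))"
proof -
  define \<omega> where "\<omega> = Delta N z (N-2)"
  have "\<omega> * cnj \<omega> = 1"
    using complex_norm_square[of \<omega>] unimodular unfolding \<omega>_def by simp
  define in_range where "in_range n \<longleftrightarrow> 1 \<le> n \<and> (N = 2*l+1 \<longrightarrow> n \<le> l-1) \<and> (N = 2*l+2 \<longrightarrow> n \<le> l)" for n
  have "n = 0 \<or> n = N - 2 \<or> in_range n \<or> in_range (N - 2 - n)"
    using assms(1,4) unfolding in_range_def by (elim disjE) linarith+
  then consider "n = 0" | "n = N - 2" | "in_range n" | "in_range (N - 2 - n)"
    by blast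
  then show ?thesis
  proof cases
    case 3
    then show ?thesis
      using hyp unfolding in_range_def by (simp add: mult.commute)
  next
    case 4
    moreover have "N - 2 - (N - 2 - n) = n"
      using \<open>n \<le> N - 2\<close> by simp
    ultimately have "Delta N z (N-2-n) = cnj (Delta N z n) * \<omega>"
      using hyp[of "N - 2 - n"] unfolding in_range_def \<omega>_def by presburger
    then have "\<omega> * cnj (Delta N z (N-2-n)) = (\<omega> * cnj \<omega>) * Delta N z n"
      by simp
    then show ?thesis
      using \<open>\<omega> * cnj \<omega> = 1\<close> unfolding \<omega>_def by simp
  qed (use \<open>\<omega> * cnj \<omega> = 1\<close> in \<open>simp_all add: \<omega>_def\<close>)
qed

definition freq :: "nat \<Rightarrow> nat \<Rightarrow> real" where
  "freq N n = real N - 2 * real n - 2"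

lemma esym_trig_sum_weighted_real:
  fixes z :: "nat \<Rightarrow> complex"
  assumes "2 \<le> N" and twist: "c * \<omega> = cnj c"
    and refl: "\<And>n. n \<le> N - 2 \<Longrightarrow> Delta N z n = \<omega> * cnj (Delta N z (N - 2 - n))"
  shows "Im (\<Sum>n=0..N. of_real (real N * (real N + 2) + 2 * (real N + 1) * freq N n + freq N n ^ 2)
            * (c * esym N z n) * cis (freq N n * s)) = 0"
proof -
  define \<kappa> where "\<kappa> n = real N * (real N + 2) + 2 * (real N + 1) * freq N n + freq N n ^ 2" for n
  have \<kappa>: "\<kappa> n = 4 * (real N - real n - 1) * (real N - real n)" for n
    by (simp add: \<kappa>_def freq_def algebra_simps power2_eq_square)
  define t where "t n = of_real (\<kappa> n) * (c * esym N z n) * cis (freq N n * s)" for n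
  have "\<kappa> n = 0" if "n \<in> {0..N} - {0..N-2}" for n
  proof -
    from that have "n = N - 1 \<or> n = N"
      by auto
    then show ?thesis
      using \<open>2 \<le> N\<close> by (auto simp: \<kappa> of_nat_diff)
  qed
  then have "(\<Sum>n=0..N. t n) = (\<Sum>n=0..N-2. t n)"
    by (intro sum.mono_neutral_right) (auto simp: t_def)
  also have "Im (\<Sum>n=0..N-2. t n) = 0"
  proof (rule Im_sum_reflect_cnj)
    fix n assume "n \<le> N - 2"
    then have n: "n + 2 \<le> N" "real (N - 2 - n) = real N - real n - 2"
      using \<open>2 \<le> N\<close> by (simp_all add: of_nat_diff)
    have weight: "\<kappa> (N - 2 - n) * real (N choose (N - 2 - n)) = \<kappa> n * real (N choose n)"
      using binomial_reflect_weight[OF n(1)] n(2) unfolding \<kappa> by (simp add: algebra_simps)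
    have freq_reflect: "freq N (N - 2 - n) = - freq N n"
      using n(2) by (simp add: freq_def)
    have cnj_reflect: "cnj c * cnj (Delta N z (N - 2 - n)) = c * Delta N z n"
      using refl[OF \<open>n \<le> N - 2\<close>] twist by (simp flip: mult.assoc)
    have "cnj (t (N - 2 - n)) = of_real (\<kappa> (N - 2 - n) * real (N choose (N - 2 - n)))
        * (cnj c * cnj (Delta N z (N - 2 - n))) * cis (- freq N (N - 2 - n) * s)"
      by (simp add: t_def esym_eq_Delta cis_cnj mult_ac)
    also have "\<dots> = of_real (\<kappa> n * real (N choose n)) * (c * Delta N z n) * cis (freq N n * s)"
      unfolding weight freq_reflect cnj_reflect by simp
    also have "\<dots> = t n"
      using n(1) by (simp add: t_def esym_eq_Delta mult_ac)
    finally show "t n = cnj (t (N - 2 - n))"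
      by simp
  qed
  finally show ?thesis
    by (simp add: t_def \<kappa>_def)
qed

lemma unimodular_ex_twist:
  fixes \<omega> :: complex
  assumes "cmod \<omega> = 1"
  obtains c where "c \<noteq> 0" "c * \<omega> = cnj c"
proof
  have unit: "cnj (csqrt \<omega>) * csqrt \<omega> = 1"
    using complex_norm_square[of "csqrt \<omega>"] assms by (simp add: mult.commute)
  then show "cnj (csqrt \<omega>) * \<omega> = cnj (cnj (csqrt \<omega>))"
    by (metis power2_csqrt power2_eq_square mult.assoc mult_1 complex_cnj_cnj)
  show "cnj (csqrt \<omega>) \<noteq> 0"
    using unit by auto
qed

section \<open>A continuous logarithm and its winding\<close>

lemma one_plus_notin_nonpos_Reals: "cmod u < 1 \<Longrightarrow> 1 + u \<notin> \<real>\<^sub>\<le>\<^sub>0"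
  using abs_Re_le_cmod[of u] by (auto simp: complex_nonpos_Reals_iff)

text \<open>Factoring out the dominant one of the two terms keeps the argument of \<open>Ln\<close> of the
  form \<open>1 + u\<close> with \<open>|u| < 1\<close>, away from its branch cut.\<close>

lemma root_factor_continuous_log_inside:
  fixes w :: complex
  assumes "cmod w < 1"
  obtains \<phi> where "continuous_on UNIV \<phi>" "\<And>s. exp (\<phi> s) = w * cis (- s) + cis s"
    "Im (\<phi> (2 * pi)) = Im (\<phi> 0) + 2 * pi"
proof -
  have small: "cmod (w * cis (- 2 * s)) < 1" for s
    using assms by (simp add: norm_mult)
  then have nonzero: "1 + w * cis (- 2 * s) \<noteq> 0" for s
    by (metis one_plus_notin_nonpos_Reals nonpos_Reals_zero_I)
  show ?thesis
  proof (rule that[of "\<lambda>s. \<i> * of_real s + Ln (1 + w * cis (- 2 * s))"])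
    show "continuous_on UNIV (\<lambda>s. \<i> * of_real s + Ln (1 + w * cis (- 2 * s)))"
      by (intro continuous_intros one_plus_notin_nonpos_Reals small)
    show "exp (\<i> * of_real s + Ln (1 + w * cis (- 2 * s))) = w * cis (- s) + cis s" for s
      using nonzero[of s] by (simp add: exp_add cis_conv_exp[symmetric] algebra_simps cis_mult)
    have "cis (- 2 * (2 * pi)) = 1"
      by (simp add: complex_eq_iff)
    then show "Im (\<i> * of_real (2 * pi) + Ln (1 + w * cis (- 2 * (2 * pi))))
        = Im (\<i> * of_real 0 + Ln (1 + w * cis (- 2 * 0))) + 2 * pi"
      by simp
  qed
qed

lemma root_factor_continuous_log_outside:
  fixes w :: complex
  assumes "1 < cmod w"
  obtains \<phi> where "continuous_on UNIV \<phi>" "\<And>s. exp (\<phi> s) = w * cis (- s) + cis s"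
    "Im (\<phi> (2 * pi)) = Im (\<phi> 0) - 2 * pi"
proof -
  have "w \<noteq> 0"
    using assms by auto
  have small: "cmod (cis (2 * s) / w) < 1" for s
    using assms by (simp add: norm_divide divide_less_eq_1)
  then have nonzero: "1 + cis (2 * s) / w \<noteq> 0" for s
    by (metis one_plus_notin_nonpos_Reals nonpos_Reals_zero_I)
  show ?thesis
  proof (rule that[of "\<lambda>s. Ln w + \<i> * of_real (- s) + Ln (1 + cis (2 * s) / w)"])
    show "continuous_on UNIV (\<lambda>s. Ln w + \<i> * of_real (- s) + Ln (1 + cis (2 * s) / w))"
      using \<open>w \<noteq> 0\<close> by (intro continuous_intros one_plus_notin_nonpos_Reals small) auto
    fix s
    have "exp (Ln w + \<i> * of_real (- s) + Ln (1 + cis (2 * s) / w)) = w * cis (- s) * (1 + cis (2 * s) / w)"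
      unfolding exp_add cis_conv_exp[symmetric] using nonzero[of s] \<open>w \<noteq> 0\<close> by simp
    also have "\<dots> = w * cis (- s) + cis (- s) * cis (2 * s)"
      using \<open>w \<noteq> 0\<close> by (simp add: field_simps)
    finally show "exp (Ln w + \<i> * of_real (- s) + Ln (1 + cis (2 * s) / w)) = w * cis (- s) + cis s"
      by (simp add: cis_mult)
  next
    have "cis (2 * (2 * pi)) = 1"
      by (simp add: complex_eq_iff)
    then show "Im (Ln w + \<i> * of_real (- (2 * pi)) + Ln (1 + cis (2 * (2 * pi)) / w))
        = Im (Ln w + \<i> * of_real (- 0) + Ln (1 + cis (2 * 0) / w)) - 2 * pi"
      by simp
  qed
qed

lemma root_factor_continuous_log:
  fixes w :: complex
  assumes "cmod w \<noteq> 1"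
  obtains \<phi> where "continuous_on UNIV \<phi>" "\<And>s. exp (\<phi> s) = w * cis (- s) + cis s"
    "Im (\<phi> (2 * pi)) = Im (\<phi> 0) + (if cmod w < 1 then 2 * pi else - (2 * pi))"
proof (cases "cmod w < 1")
  case True
  obtain \<phi> where "continuous_on UNIV \<phi>" "\<And>s. exp (\<phi> s) = w * cis (- s) + cis s"
    "Im (\<phi> (2 * pi)) = Im (\<phi> 0) + 2 * pi"
    using root_factor_continuous_log_inside[OF True] by blast
  with True show ?thesis
    by (intro that[of \<phi>]) simp_all
next
  case False
  with assms have "1 < cmod w"
    by simp
  obtain \<phi> where "continuous_on UNIV \<phi>" "\<And>s. exp (\<phi> s) = w * cis (- s) + cis s"
    "Im (\<phi> (2 * pi)) = Im (\<phi> 0) - 2 * pi"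
    using root_factor_continuous_log_outside[OF \<open>1 < cmod w\<close>] by blast
  with False show ?thesis
    by (intro that[of \<phi>]) simp_all
qed

lemma cis_root_product_expansion:
  "c * cis (- 2 * s) * (\<Prod>j=1..N. z j * cis (- s) + cis s)
    = (\<Sum>n=0..N. c * esym N z n * cis (freq N n * s))"
proof -
  have "c * cis (- 2 * s) * (\<Prod>j=1..N. z j * cis (- s) + cis s)
      = (\<Sum>n=0..N. c * esym N z n * (cis (- 2 * s) * cis (- s) ^ n * cis s ^ (N - n)))"
    unfolding prod_linear_esym_expansion by (simp add: sum_distrib_left mult_ac)
  also have "\<dots> = (\<Sum>n=0..N. c * esym N z n * cis (freq N n * s))"
    by (intro sum.cong refl)
      (simp add: Complex.DeMoivre cis_mult freq_def of_nat_diff algebra_simps)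
  finally show ?thesis .
qed

lemma sum_if_plus_minus:
  fixes x :: real
  assumes "finite A"
  shows "(\<Sum>j\<in>A. if P j then x else - x) = x * (2 * real (card {j\<in>A. P j}) - real (card A))"
proof -
  have "(\<Sum>j\<in>A. if P j then x else - x) = (\<Sum>j\<in>A. 2 * x * of_bool (P j) - x)"
    by (intro sum.cong) auto
  also have "\<dots> = 2 * x * real (card (A \<inter> {j. P j})) - x * real (card A)"
    using assms by (simp add: sum_subtractf flip: sum_distrib_left)
  also have "A \<inter> {j. P j} = {j\<in>A. P j}"
    by auto
  finally show ?thesis
    by (simp add: algebra_simps)
qed

lemma root_trig_sum_continuous_log:
  fixes z :: "nat \<Rightarrow> complex"
  assumes off_circle: "\<And>j. j \<in> {1..N} \<Longrightarrow> cmod (z j) \<noteq> 1" and "c \<noteq> 0"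
  obtains g where "continuous_on UNIV g"
    "\<And>s. exp (g s) = (\<Sum>n=0..N. c * esym N z n * cis (freq N n * s))"
    "Im (g (2 * pi)) = Im (g 0) + 2 * pi * (2 * real (card {j\<in>{1..N}. cmod (z j) < 1}) - real N - 2)"
proof -
  have "\<forall>j\<in>{1..N}. \<exists>\<phi>. continuous_on UNIV \<phi> \<and> (\<forall>s. exp (\<phi> s) = z j * cis (- s) + cis s)
      \<and> Im (\<phi> (2 * pi)) = Im (\<phi> 0) + (if cmod (z j) < 1 then 2 * pi else - (2 * pi))"
    by (metis root_factor_continuous_log off_circle)
  then obtain \<phi> where \<phi>: "\<forall>j\<in>{1..N}. continuous_on UNIV (\<phi> j) \<and> (\<forall>s. exp (\<phi> j s) = z j * cis (- s) + cis s)
      \<and> Im (\<phi> j (2 * pi)) = Im (\<phi> j 0) + (if cmod (z j) < 1 then 2 * pi else - (2 * pi))"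
    by (rule bchoice[elim_format]) blast
  show ?thesis
  proof (rule that[of "\<lambda>s. Ln c + \<i> * of_real (- 2 * s) + (\<Sum>j=1..N. \<phi> j s)"])
    show "continuous_on UNIV (\<lambda>s. Ln c + \<i> * of_real (- 2 * s) + (\<Sum>j=1..N. \<phi> j s))"
      using \<phi> by (intro continuous_intros) auto
    show "exp (Ln c + \<i> * of_real (- 2 * s) + (\<Sum>j=1..N. \<phi> j s)) = (\<Sum>n=0..N. c * esym N z n * cis (freq N n * s))" for s
      unfolding exp_add exp_sum[OF finite_atLeastAtMost] cis_conv_exp[symmetric] exp_Ln[OF \<open>c \<noteq> 0\<close>]
      using \<phi> by (simp add: cis_root_product_expansion[symmetric])
    have "(\<Sum>j=1..N. Im (\<phi> j (2 * pi))) = (\<Sum>j=1..N. Im (\<phi> j 0)) + (\<Sum>j=1..N. if cmod (z j) < 1 then 2 * pi else - (2 * pi))"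
      using \<phi> by (simp add: sum.distrib)
    also have "(\<Sum>j=1..N. if cmod (z j) < 1 then 2 * pi else - (2 * pi)) = 2 * pi * (2 * real (card {j\<in>{1..N}. cmod (z j) < 1}) - real N)"
      using sum_if_plus_minus[of "{1..N}" "\<lambda>j. cmod (z j) < 1" "2 * pi"] by simp
    finally show "Im (Ln c + \<i> * of_real (- 2 * (2 * pi)) + (\<Sum>j=1..N. \<phi> j (2 * pi)))
        = Im (Ln c + \<i> * of_real (- 2 * 0) + (\<Sum>j=1..N. \<phi> j 0)) + 2 * pi * (2 * real (card {j\<in>{1..N}. cmod (z j) < 1}) - real N - 2)"
      by (simp add: Im_sum algebra_simps)
  qed
qed

theorem mainTheorem1:
  fixes N l :: nat and z :: "nat \<Rightarrow> complex"
  assumes "N \<ge> 2"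
    and "N = 2*l+1 \<or> N = 2*l+2"
    and "cmod (Delta N z (N-2)) = 1"
    and "\<And>n. 1 \<le> n \<Longrightarrow> (N = 2*l+1 \<longrightarrow> n \<le> l-1) \<Longrightarrow> (N = 2*l+2 \<longrightarrow> n \<le> l) \<Longrightarrow>
           Delta N z n = cnj (Delta N z (N-2-n)) * Delta N z (N-2)"
    and "\<And>n. n \<in> {1..N} \<Longrightarrow> cmod (z n) \<noteq> 1"
  shows "real (card {n\<in>{1..N}. cmod (z n) < 1}) \<le> 1 + real N / 2"
proof -
  obtain c where "c \<noteq> 0" and twist: "c * Delta N z (N-2) = cnj c"
    using unimodular_ex_twist[OF assms(3)] .
  obtain g where "continuous_on UNIV g"
    and exp_g: "\<And>s. exp (g s) = (\<Sum>n=0..N. c * esym N z n * cis (freq N n * s))"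
    and winding: "Im (g (2 * pi)) = Im (g 0) + 2 * pi * (2 * real (card {j\<in>{1..N}. cmod (z j) < 1}) - real N - 2)"
    using root_trig_sum_continuous_log[of N z, OF assms(5) \<open>c \<noteq> 0\<close>] by blast
  note ode = trig_sum_second_order_ode[of "real N * (real N + 2)" "2 * (real N + 1)" "freq N" "\<lambda>n. c * esym N z n" "{0..N}",
      OF esym_trig_sum_weighted_real[OF assms(1) twist Delta_reflection[OF assms(2-4)]]]
  have "Im (g (2 * pi)) < Im (g 0) + 2 * pi"
    by (rule ode_arg_increase_less_2pi[OF _ _ _ continuous_on_subset[OF \<open>continuous_on UNIV g\<close>] ode[folded exp_g]]) auto
  then have "2 * card {j\<in>{1..N}. cmod (z j) < 1} < N + 3"
    unfolding winding by simp
  then show ?thesis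
    by linarith
qed

end
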